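(* Consider the planar ODE system $$\frac{du}{dt}=a_1u-b_1u^2-c_1uv,\qquad \frac{dv}{dt}=\frac{a_2v}{1+ku}-b_2v^2-c_2uv,$$ with positive parameters $a_1,a_2,b_1,b_2,c_1,c_2$ and fear coefficient $k\ge 0$. Suppose that for $k=0$ the system is in the weak competition setting, i.e. $\frac{c_2}{b_1}<\frac{a_2}{a_1}<\frac{b_2}{c_1}$ and $b_1b_2-c_1c_2>0$, and moreover $b_2b_1>2c_1c_2$. Then for every fear coefficient $k$ with $$k>k_c=\frac{1}{a_1^2c_2}\left(b_1^2a_2-a_1c_2b_1\right),$$ the equilibrium $(\frac{a_1}{b_1},0)$ is globally asymptotically stable (i.e. $u$ competitively excludes $v$).
   Context: $u,v\ge 0$ are population densities of two competing species; $v$ is "fearful" of $u$, modeled by the factor $\frac{1}{1+ku}$ in the growth rate of $v$. Global asymptotic stability refers to solutions with positive initial data. *)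

theory Defs
  imports "HOL-Analysis.Analysis"
begin

definition fear_solution ::
  "real \<Rightarrow> real \<Rightarrow> real \<Rightarrow> real \<Rightarrow> real \<Rightarrow> real \<Rightarrow> real \<Rightarrow>
   (real \<Rightarrow> real) \<Rightarrow> (real \<Rightarrow> real) \<Rightarrow> bool" where
  "fear_solution a1 a2 b1 b2 c1 c2 k u v \<longleftrightarrow>
     (\<forall>t\<ge>0.
        (u has_real_derivative (a1 * u t - b1 * (u t)^2 - c1 * u t * v t)) (at t within {0..}) \<and>
        (v has_real_derivative (a2 * v t / (1 + k * u t) - b2 * (v t)^2 - c2 * u t * v t))
           (at t within {0..}))"

definition gas_positive ::
  "((real \<Rightarrow> real) \<Rightarrow> (real \<Rightarrow> real) \<Rightarrow> bool) \<Rightarrow> real \<Rightarrow> real \<Rightarrow> bool" where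
  "gas_positive sol ue ve \<longleftrightarrow>
     (\<forall>e>0. \<exists>d>0. \<forall>u v. sol u v \<and> u 0 > 0 \<and> v 0 > 0 \<and> dist (u 0, v 0) (ue, ve) < d \<longrightarrow>
         (\<forall>t\<ge>0. dist (u t, v t) (ue, ve) < e)) \<and>
     (\<forall>u v. sol u v \<and> u 0 > 0 \<and> v 0 > 0 \<longrightarrow>
         ((\<lambda>t. (u t, v t)) \<longlongrightarrow> (ue, ve)) at_top)"

end

theory Submission
  imports Defs
begin

(* Let g x = a2 / (1 + k x) - c2 x be the per-capita growth rate of a
   rare v when u = x. Comparison arguments give limsup u <= a1/b1; an eventual bound v <= m forces
   eventually u >= x whenever c1 m + b1 x < a1, and an eventual bound u >= x forces eventually
   v <= m whenever g x < b2 m. The fear threshold k > k_c says exactly g (a1/b1) < 0; together with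
   a2 c1 < a1 b2 and the convexity of 1 / (1 + k x) it puts the v-nullcline strictly below the
   u-nullcline on [0, a1/b1]. So M = limsup v satisfies M <= g ((a1 - c1 M)/b1) / b2 < M unless
   M = 0, whence (u, v) tends to (a1/b1, 0). Stability comes from the Lyapunov function
   (u - a1/b1)^2 + v, whose derivative along solutions is nonpositive near the equilibrium, again
   because g (a1/b1) < 0. *)

lemma mvt_within_nonneg:
  fixes f :: "real \<Rightarrow> real"
  assumes f': "\<And>t. t \<ge> 0 \<Longrightarrow> (f has_real_derivative f' t) (at t within {0..})"
    and "0 \<le> a" "a < b"
  shows "\<exists>x. a < x \<and> x < b \<and> f b - f a = f' x * (b - a)"
proof -
  have "(f has_derivative (\<lambda>h. f' x * h)) (at x within {a..b})" if "a \<le> x" "x \<le> b" for x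
  proof -
    have "(f has_real_derivative f' x) (at x within {a..b})"
      using f'[of x] that \<open>0 \<le> a\<close> by (rule_tac has_field_derivative_subset) auto
    then show ?thesis by (simp add: has_field_derivative_def)
  qed
  from mvt_simple[OF \<open>a < b\<close> this] show ?thesis by (auto simp: mult.commute)
qed

lemma le_if_deriv_nonpos_above:
  fixes f :: "real \<Rightarrow> real"
  assumes f': "\<And>t. t \<ge> 0 \<Longrightarrow> (f has_real_derivative f' t) (at t within {0..})"
    and "0 \<le> a" "a \<le> b" "f a \<le> c"
    and nonpos: "\<And>t. a \<le> t \<Longrightarrow> t \<le> b \<Longrightarrow> f t > c \<Longrightarrow> f' t \<le> 0"
  shows "f b \<le> c"
proof (rule ccontr)
  assume "\<not> f b \<le> c"
  let ?S = "{a..b} \<inter> f -` {..c}"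
  have "continuous_on {a..b} f"
    using DERIV_continuous_on[of "{0..}" f f'] f' \<open>0 \<le> a\<close>
    by (auto intro: continuous_on_subset)
  then have "closed ?S" by (rule continuous_closed_preimage) auto
  moreover have "?S \<noteq> {}" "bdd_above ?S" using assms by auto
  ultimately have "Sup ?S \<in> ?S" by (rule_tac closed_contains_Sup) auto
  define s where "s = Sup ?S"
  have s: "a \<le> s" "s \<le> b" "f s \<le> c" using \<open>Sup ?S \<in> ?S\<close> unfolding s_def by auto
  have above: "f t > c" if "s < t" "t \<le> b" for t
    using cSup_upper[OF _ \<open>bdd_above ?S\<close>, of t] that s(1) unfolding s_def by force
  have "s < b" using s \<open>\<not> f b \<le> c\<close> by (cases "s = b") auto
  then obtain x where x: "s < x" "x < b" "f b - f s = f' x * (b - s)"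
    using mvt_within_nonneg[OF f'] \<open>0 \<le> a\<close> s(1) by (metis order_trans)
  have "f' x * (b - s) \<le> 0"
    using nonpos[of x] above[of x] x s(1) \<open>s < b\<close> by (intro mult_nonpos_nonneg) auto
  then show False using x s(3) \<open>\<not> f b \<le> c\<close> by auto
qed

lemma less_if_deriv_nonpos_below:
  fixes f :: "real \<Rightarrow> real"
  assumes f': "\<And>t. t \<ge> 0 \<Longrightarrow> (f has_real_derivative f' t) (at t within {0..})"
    and "f 0 < l" "0 \<le> b"
    and nonpos: "\<And>t. 0 \<le> t \<Longrightarrow> t \<le> b \<Longrightarrow> f t < l \<Longrightarrow> f' t \<le> 0"
  shows "f b < l"
proof (rule ccontr)
  assume "\<not> f b < l"
  let ?S = "{0..b} \<inter> f -` {l..}"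
  have "continuous_on {0..b} f"
    using DERIV_continuous_on[of "{0..}" f f'] f' by (auto intro: continuous_on_subset)
  then have "closed ?S" by (rule continuous_closed_preimage) auto
  moreover have "?S \<noteq> {}" "bdd_below ?S" using assms \<open>\<not> f b < l\<close> by auto
  ultimately have "Inf ?S \<in> ?S" by (rule_tac closed_contains_Inf) auto
  define s where "s = Inf ?S"
  have s: "0 \<le> s" "s \<le> b" "f s \<ge> l" using \<open>Inf ?S \<in> ?S\<close> unfolding s_def by auto
  have below: "f t < l" if "0 \<le> t" "t < s" for t
    using cInf_lower[OF _ \<open>bdd_below ?S\<close>, of t] that s(2) unfolding s_def by force
  have "0 < s" using s \<open>f 0 < l\<close> by (cases "s = 0") auto
  then obtain x where x: "0 < x" "x < s" "f s - f 0 = f' x * (s - 0)"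
    using mvt_within_nonneg[OF f', of 0 s] by auto
  have "f' x * (s - 0) \<le> 0"
    using nonpos[of x] below[of x] x s(2) by (intro mult_nonpos_nonneg) auto
  then show False using x s(3) \<open>f 0 < l\<close> by auto
qed

lemma eventually_le_if_deriv_le_neg_above:
  fixes f :: "real \<Rightarrow> real"
  assumes f': "\<And>t. t \<ge> 0 \<Longrightarrow> (f has_real_derivative f' t) (at t within {0..})"
    and "0 \<le> T" "0 < \<delta>" and decr: "\<And>t. T \<le> t \<Longrightarrow> f t > c \<Longrightarrow> f' t \<le> - \<delta>"
  shows "\<forall>\<^sub>F t in at_top. f t \<le> c"
proof -
  have "\<exists>t0\<ge>T. f t0 \<le> c"
  proof (rule ccontr)
    assume "\<not> ?thesis"
    then have above: "\<And>t. T \<le> t \<Longrightarrow> f t > c" by force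
    define t where "t = T + (f T - c) / \<delta> + 1"
    have "(f T - c) / \<delta> > 0" using above[of T] \<open>0 < \<delta>\<close> by simp
    then have "T < t" unfolding t_def by simp
    then obtain x where x: "T < x" "x < t" "f t - f T = f' x * (t - T)"
      using mvt_within_nonneg[OF f' \<open>0 \<le> T\<close>] by blast
    have "f' x * (t - T) \<le> - \<delta> * (t - T)"
      using decr[of x] above[of x] x \<open>T < t\<close> by (intro mult_right_mono) auto
    also have "\<dots> = c - f T - \<delta>" using \<open>0 < \<delta>\<close> unfolding t_def by (simp add: field_simps)
    finally show False using x above[of t] \<open>T < t\<close> \<open>0 < \<delta>\<close> by auto
  qed
  then obtain t0 where "T \<le> t0" "f t0 \<le> c" by blast
  have "f t \<le> c" if "t0 \<le> t" for t
  proof (rule le_if_deriv_nonpos_above[OF f' _ that \<open>f t0 \<le> c\<close>])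
    show "0 \<le> t0" using \<open>0 \<le> T\<close> \<open>T \<le> t0\<close> by simp
    fix s assume "t0 \<le> s" "c < f s"
    then show "f' s \<le> 0" using decr[of s] \<open>T \<le> t0\<close> \<open>0 < \<delta>\<close> by simp
  qed
  then show ?thesis by (auto simp: eventually_at_top_linorder)
qed

lemma pos_if_deriv_proportional:
  fixes x G :: "real \<Rightarrow> real"
  assumes x': "\<And>t. t \<ge> 0 \<Longrightarrow> (x has_real_derivative x t * G t) (at t within {0..})"
    and G: "continuous_on {0..} G" and "0 < x 0" "0 \<le> t"
  shows "0 < x t"
proof -
  have "continuous_on {0..t} G" using G by (rule continuous_on_subset) auto
  then obtain B where B: "\<And>\<tau>. \<tau> \<in> {0..t} \<Longrightarrow> norm (G \<tau>) \<le> B"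
    using continuous_on_compact_bound[OF compact_Icc] by blast
  \<comment> \<open>\<open>(x e\<^sup>B\<^sup>\<tau>)' = x e\<^sup>B\<^sup>\<tau> (G + B)\<close> has the sign of \<open>x\<close> on \<open>[0, t]\<close>.\<close>
  define z where "z \<tau> = - x \<tau> * exp (B * \<tau>)" for \<tau>
  have z': "(z has_real_derivative - x \<tau> * exp (B * \<tau>) * (G \<tau> + B)) (at \<tau> within {0..})"
    if "\<tau> \<ge> 0" for \<tau>
    unfolding z_def by (rule derivative_eq_intros x'[OF that] refl | simp add: algebra_simps)+
  have "z t < 0"
  proof (rule less_if_deriv_nonpos_below[OF z'])
    fix \<tau> assume "0 \<le> \<tau>" "\<tau> \<le> t" "z \<tau> < 0"
    then have "0 < x \<tau>" "0 \<le> G \<tau> + B" using B[of \<tau>] unfolding z_def by (auto simp: zero_less_mult_iff)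
    then show "- x \<tau> * exp (B * \<tau>) * (G \<tau> + B) \<le> 0" by simp
  qed (use \<open>0 < x 0\<close> \<open>0 \<le> t\<close> in \<open>auto simp: z_def\<close>)
  then show ?thesis unfolding z_def by (simp add: zero_less_mult_iff)
qed

locale fear_competition =
  fixes a1 a2 b1 b2 c1 c2 k :: real
  assumes a1_pos: "0 < a1" and a2_pos: "0 < a2" and b1_pos: "0 < b1" and b2_pos: "0 < b2"
    and c1_pos: "0 < c1" and c2_pos: "0 < c2" and k_nonneg: "0 \<le> k"
begin

definition invasion_rate :: "real \<Rightarrow> real" where
  "invasion_rate x = a2 / (1 + k * x) - c2 * x"

lemma invasion_rate_antimono:
  assumes "0 \<le> y" "y \<le> x"
  shows "invasion_rate x \<le> invasion_rate y"
proof -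
  have "1 + k * y \<le> 1 + k * x" "0 < 1 + k * y"
    using assms k_nonneg by (auto intro: mult_left_mono add_pos_nonneg)
  then have "a2 / (1 + k * x) \<le> a2 / (1 + k * y)" using a2_pos by (intro divide_left_mono) auto
  moreover have "c2 * y \<le> c2 * x" using assms c2_pos by simp
  ultimately show ?thesis unfolding invasion_rate_def by linarith
qed

lemma invasion_rate_lipschitz:
  assumes "0 \<le> y" "y \<le> x"
  shows "invasion_rate y \<le> invasion_rate x + (a2 * k + c2) * (x - y)"
proof -
  have py: "1 \<le> 1 + k * y" and px: "1 \<le> 1 + k * x" using assms k_nonneg by auto
  have "a2 / (1 + k * y) - a2 / (1 + k * x) = a2 * k * (x - y) / ((1 + k * y) * (1 + k * x))"
    using py px by (simp add: field_simps)
  also have "\<dots> \<le> a2 * k * (x - y) / 1"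
    using assms a2_pos k_nonneg mult_mono[OF py px] by (intro divide_left_mono) auto
  finally show ?thesis unfolding invasion_rate_def by (simp add: algebra_simps)
qed

lemma invasion_rate_less_left:
  assumes "0 < y" "invasion_rate y < c"
  obtains x where "0 < x" "x < y" "invasion_rate x < c"
proof
  define K where "K = a2 * k + c2"
  have "0 < K" using a2_pos c2_pos k_nonneg unfolding K_def by (simp add: add_nonneg_pos)
  define x where "x = y - min (y / 2) ((c - invasion_rate y) / (2 * K))"
  show "0 < x" "x < y" using assms \<open>0 < K\<close> unfolding x_def by auto
  have "invasion_rate x \<le> invasion_rate y + K * (y - x)"
    using invasion_rate_lipschitz \<open>0 < x\<close> \<open>x < y\<close> unfolding K_def by simp
  moreover have "K * (y - x) \<le> (c - invasion_rate y) / 2"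
  proof -
    have "y - x \<le> (c - invasion_rate y) / (2 * K)" unfolding x_def by simp
    then show ?thesis using \<open>0 < K\<close> by (simp add: field_simps)
  qed
  ultimately show "invasion_rate x < c" using assms by argo
qed

lemma invasion_rate_neg_iff:
  "invasion_rate (a1 / b1) < 0 \<longleftrightarrow> k > (b1^2 * a2 - a1 * c2 * b1) / (a1^2 * c2)"
proof -
  have p: "0 < 1 + k * (a1 / b1)" using a1_pos b1_pos k_nonneg by (simp add: add_pos_nonneg)
  have "invasion_rate (a1 / b1) < 0 \<longleftrightarrow> a2 < c2 * (a1 / b1) * (1 + k * (a1 / b1))"
    using p unfolding invasion_rate_def by (simp add: divide_less_eq)
  also have "\<dots> \<longleftrightarrow> a2 * b1^2 < c2 * a1 * b1 + k * c2 * a1^2"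
    using b1_pos by (simp add: field_simps power2_eq_square)
  also have "\<dots> \<longleftrightarrow> k > (b1^2 * a2 - a1 * c2 * b1) / (a1^2 * c2)"
    using a1_pos c2_pos by (simp add: pos_divide_less_eq algebra_simps)
  finally show ?thesis .
qed

end

locale fear_trajectory = fear_competition +
  fixes u v :: "real \<Rightarrow> real"
  assumes solution: "fear_solution a1 a2 b1 b2 c1 c2 k u v"
    and u0_pos: "0 < u 0" and v0_pos: "0 < v 0"
begin

lemma u_deriv:
  "t \<ge> 0 \<Longrightarrow> (u has_real_derivative u t * (a1 - b1 * u t - c1 * v t)) (at t within {0..})"
  using solution unfolding fear_solution_def
  by (rule_tac DERIV_cong) (auto simp: algebra_simps power2_eq_square)

lemma v_deriv:
  "t \<ge> 0 \<Longrightarrow> (v has_real_derivative v t * (invasion_rate (u t) - b2 * v t)) (at t within {0..})"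
  using solution unfolding fear_solution_def
  by (rule_tac DERIV_cong) (auto simp: invasion_rate_def algebra_simps power2_eq_square)

lemma continuous_u: "continuous_on {0..} u"
  by (rule DERIV_continuous_on, rule u_deriv) simp

lemma continuous_v: "continuous_on {0..} v"
  by (rule DERIV_continuous_on, rule v_deriv) simp

lemma u_pos:
  assumes "t \<ge> 0"
  shows "0 < u t"
proof -
  have "continuous_on {0..} (\<lambda>t. a1 - b1 * u t - c1 * v t)"
    by (intro continuous_intros continuous_u continuous_v)
  from pos_if_deriv_proportional[OF u_deriv this u0_pos assms] show ?thesis .
qed

lemma v_pos:
  assumes "t \<ge> 0"
  shows "0 < v t"
proof -
  have "0 < 1 + k * u t" if "t \<ge> 0" for t
    using u_pos[OF that] k_nonneg by (simp add: add_pos_nonneg)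
  then have "1 + k * u t \<noteq> 0" if "t \<ge> 0" for t
    using that by (metis less_irrefl)
  then have "continuous_on {0..} (\<lambda>t. invasion_rate (u t) - b2 * v t)"
    unfolding invasion_rate_def by (intro continuous_intros continuous_u continuous_v) auto
  from pos_if_deriv_proportional[OF v_deriv this v0_pos assms] show ?thesis .
qed

lemma eventually_u_le:
  assumes "0 < \<epsilon>"
  shows "\<forall>\<^sub>F t in at_top. u t \<le> a1 / b1 + \<epsilon>"
proof (rule eventually_le_if_deriv_le_neg_above[OF u_deriv order_refl])
  let ?c = "a1 / b1 + \<epsilon>"
  show "0 < ?c * (b1 * \<epsilon>)" using a1_pos b1_pos \<open>0 < \<epsilon>\<close> by (simp add: add_pos_pos)
  fix t assume "0 \<le> t" "?c < u t"
  have "a1 + b1 * \<epsilon> = b1 * ?c" using b1_pos by (simp add: field_simps)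
  also have "\<dots> < b1 * u t" using \<open>?c < u t\<close> b1_pos by simp
  finally have "a1 - b1 * u t - c1 * v t \<le> - (b1 * \<epsilon>)"
    using mult_pos_pos[OF c1_pos v_pos[OF \<open>0 \<le> t\<close>]] by (simp add: algebra_simps)
  then have "u t * (a1 - b1 * u t - c1 * v t) \<le> u t * - (b1 * \<epsilon>)"
    using u_pos[OF \<open>0 \<le> t\<close>] by (intro mult_left_mono) auto
  also have "\<dots> \<le> ?c * - (b1 * \<epsilon>)"
    using \<open>?c < u t\<close> b1_pos \<open>0 < \<epsilon>\<close> by (intro mult_right_mono_neg) auto
  finally show "u t * (a1 - b1 * u t - c1 * v t) \<le> - (?c * (b1 * \<epsilon>))" by simp
qed

lemma eventually_u_ge_if_v_le:
  assumes v_le: "\<forall>\<^sub>F t in at_top. v t \<le> m" and "0 < x" and gap: "c1 * m + b1 * x < a1"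
  shows "\<forall>\<^sub>F t in at_top. x \<le> u t"
proof -
  obtain T where T: "0 \<le> T" "\<And>t. T \<le> t \<Longrightarrow> v t \<le> m"
    using v_le unfolding eventually_at_top_linorder by (metis linear order_trans)
  \<comment> \<open>\<open>- ln u\<close> decreases at a uniform rate as long as \<open>u < x\<close>.\<close>
  have "((\<lambda>t. - ln (u t)) has_real_derivative - (a1 - b1 * u t - c1 * v t)) (at t within {0..})"
    if "t \<ge> 0" for t
  proof -
    have "((\<lambda>t. ln (u t)) has_real_derivative inverse (u t) * (u t * (a1 - b1 * u t - c1 * v t)))
        (at t within {0..})"
      by (rule DERIV_chain2[OF DERIV_ln[OF u_pos[OF that]] u_deriv[OF that]])
    then show ?thesis
      by (rule_tac DERIV_cong, rule DERIV_minus) (use u_pos[OF that] in \<open>simp add: field_simps\<close>)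
  qed
  then have "\<forall>\<^sub>F t in at_top. - ln (u t) \<le> - ln x"
  proof (rule eventually_le_if_deriv_le_neg_above[OF _ \<open>0 \<le> T\<close>])
    show "0 < a1 - c1 * m - b1 * x" using gap by simp
    fix t assume "T \<le> t" "- ln x < - ln (u t)"
    then have "u t < x" using u_pos[of t] \<open>0 < x\<close> \<open>0 \<le> T\<close> by simp
    then have "b1 * u t \<le> b1 * x" using b1_pos by simp
    moreover have "c1 * v t \<le> c1 * m" using T(2)[OF \<open>T \<le> t\<close>] c1_pos by simp
    ultimately show "- (a1 - b1 * u t - c1 * v t) \<le> - (a1 - c1 * m - b1 * x)" by simp
  qed
  moreover have "\<forall>\<^sub>F t in at_top. 0 \<le> (t::real)" by (rule eventually_ge_at_top)
  ultimately show ?thesis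
    by eventually_elim (use u_pos \<open>0 < x\<close> in auto)
qed

lemma eventually_v_le_if_u_ge:
  assumes u_ge: "\<forall>\<^sub>F t in at_top. x \<le> u t" and "0 \<le> x" "0 < m"
    and gap: "invasion_rate x < b2 * m"
  shows "\<forall>\<^sub>F t in at_top. v t \<le> m"
proof -
  obtain T where T: "0 \<le> T" "\<And>t. T \<le> t \<Longrightarrow> x \<le> u t"
    using u_ge unfolding eventually_at_top_linorder by (metis linear order_trans)
  let ?\<eta> = "b2 * m - invasion_rate x"
  show ?thesis
  proof (rule eventually_le_if_deriv_le_neg_above[OF v_deriv \<open>0 \<le> T\<close>])
    show "0 < m * ?\<eta>" using gap \<open>0 < m\<close> by simp
    fix t assume "T \<le> t" "m < v t"
    have "invasion_rate (u t) \<le> invasion_rate x"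
      using invasion_rate_antimono[OF \<open>0 \<le> x\<close> T(2)[OF \<open>T \<le> t\<close>]] .
    moreover have "b2 * m < b2 * v t" using \<open>m < v t\<close> b2_pos by simp
    ultimately have "invasion_rate (u t) - b2 * v t \<le> - ?\<eta>" by simp
    then have "v t * (invasion_rate (u t) - b2 * v t) \<le> v t * - ?\<eta>"
      using \<open>m < v t\<close> \<open>0 < m\<close> by (intro mult_left_mono) auto
    also have "\<dots> \<le> m * - ?\<eta>"
      using \<open>m < v t\<close> gap by (intro mult_right_mono_neg) auto
    finally show "v t * (invasion_rate (u t) - b2 * v t) \<le> - (m * ?\<eta>)" by (simp add: algebra_simps)
  qed
qed

end

locale fear_exclusion = fear_competition +
  assumes weak_competition: "a2 * c1 < a1 * b2"
    and invasion_rate_equilibrium_neg: "invasion_rate (a1 / b1) < 0"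
begin

lemma invasion_rate_less_u_nullcline:
  assumes "0 \<le> x" "x \<le> a1 / b1"
  shows "invasion_rate x < b2 * (a1 - b1 * x) / c1"
proof -
  define e where "e = a1 / b1"
  have "0 < e" using a1_pos b1_pos unfolding e_def by simp
  have p: "0 < 1 + k * x" and q: "0 < 1 + k * e"
    using assms \<open>0 < e\<close> k_nonneg by (auto intro: add_pos_nonneg)
  \<comment> \<open>Replacing the convex term \<open>a2 / (1 + k x)\<close> by its chord over \<open>[0, a1 / b1]\<close> bounds the
    difference of the two sides by an affine function \<open>A + B x\<close>, negative at both ends.\<close>
  define A where "A = a2 - b2 * a1 / c1"
  define B where "B = b2 * b1 / c1 - a2 * k / (1 + k * e) - c2"
  have "1 + k * e \<le> (1 + k * x) * (1 + k * e - k * x)"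
  proof -
    have "(1 + k * x) * (1 + k * e - k * x) = 1 + k * e + k * k * x * (e - x)"
      by (simp add: algebra_simps)
    moreover have "0 \<le> k * k * x * (e - x)" using assms k_nonneg unfolding e_def by simp
    ultimately show ?thesis by linarith
  qed
  then have "1 / (1 + k * x) \<le> 1 - k * x / (1 + k * e)"
    using p q by (simp add: field_simps)
  then have "a2 * (1 / (1 + k * x)) \<le> a2 * (1 - k * x / (1 + k * e))"
    using a2_pos by (intro mult_left_mono) auto
  then have chord: "invasion_rate x - b2 * (a1 - b1 * x) / c1 \<le> A + B * x"
    unfolding invasion_rate_def A_def B_def by (simp add: algebra_simps diff_divide_distrib)
  have "A < 0" using weak_competition c1_pos unfolding A_def by (simp add: field_simps)
  moreover have "A + B * e < 0"
  proof -
    have "a1 = b1 * e" using b1_pos by (simp add: e_def)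
    then have "A + B * e = a2 - a2 * k * e / (1 + k * e) - c2 * e"
      unfolding A_def B_def by (simp add: algebra_simps)
    also have "\<dots> = invasion_rate e" using q unfolding invasion_rate_def by (simp add: field_simps)
    finally show ?thesis using invasion_rate_equilibrium_neg unfolding e_def by simp
  qed
  moreover have "A + B * x = (1 - x / e) * A + (x / e) * (A + B * e)"
    using \<open>0 < e\<close> by (simp add: field_simps)
  moreover have "0 \<le> x / e" "x / e \<le> 1" using assms \<open>0 < e\<close> by (auto simp: e_def[symmetric])
  ultimately have "A + B * x < 0" using convex_bound_lt[of A 0 "A + B * e" "1 - x / e" "x / e"] by simp
  then show ?thesis using chord by simp
qed

definition lyapunov :: "real \<Rightarrow> real \<Rightarrow> real" where
  "lyapunov x y = (x - a1 / b1)^2 + y"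

lemma lyapunov_deriv_nonpos:
  assumes "0 < x" "0 < y" "\<bar>x - a1 / b1\<bar> < \<rho>" "\<rho> \<le> a1 / b1"
    and small: "\<rho> * (a2 * k + c2 + 4 * c1 * (a1 / b1)) \<le> - invasion_rate (a1 / b1) / 2"
  shows "2 * (x - a1 / b1) * (x * (a1 - b1 * x - c1 * y)) + y * (invasion_rate x - b2 * y) \<le> 0"
proof -
  define e where "e = a1 / b1"
  have x: "\<bar>x - e\<bar> < \<rho>" "\<rho> \<le> e" using assms by (simp_all add: e_def)
  have K: "0 \<le> a2 * k + c2" using a2_pos c2_pos k_nonneg by simp
  have growth: "invasion_rate x \<le> invasion_rate e + (a2 * k + c2) * \<rho>"
  proof (cases "x \<le> e")
    case True
    then have "invasion_rate x \<le> invasion_rate e + (a2 * k + c2) * (e - x)"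
      using invasion_rate_lipschitz[of x e] \<open>0 < x\<close> by simp
    moreover have "(a2 * k + c2) * (e - x) \<le> (a2 * k + c2) * \<rho>"
      using x K by (intro mult_left_mono) auto
    ultimately show ?thesis by linarith
  next
    case False
    then have "invasion_rate x \<le> invasion_rate e"
      using invasion_rate_antimono[of e x] a1_pos b1_pos by (simp add: e_def)
    moreover have "0 \<le> (a2 * k + c2) * \<rho>" using K x by simp
    ultimately show ?thesis by linarith
  qed
  have cross: "- (2 * c1 * x * (x - e)) \<le> 4 * c1 * e * \<rho>"
  proof -
    have "2 * c1 * x * (- (x - e)) \<le> 2 * c1 * x * \<bar>x - e\<bar>"
      using c1_pos \<open>0 < x\<close> by (intro mult_left_mono) auto
    then have "- (2 * c1 * x * (x - e)) \<le> 2 * c1 * x * \<bar>x - e\<bar>" by (simp only: mult_minus_right)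
    also have "\<dots> \<le> 2 * c1 * (2 * e) * \<rho>"
      using x c1_pos \<open>0 < x\<close> by (intro mult_mono) auto
    finally show ?thesis by simp
  qed
  have "\<rho> * (a2 * k + c2 + 4 * c1 * e) = (a2 * k + c2) * \<rho> + 4 * c1 * e * \<rho>"
    by (simp add: algebra_simps)
  then have bracket: "invasion_rate x - 2 * c1 * x * (x - e) \<le> 0"
    using growth cross small invasion_rate_equilibrium_neg unfolding e_def by linarith
  have "a1 = b1 * e" using b1_pos by (simp add: e_def)
  then have "2 * (x - e) * (x * (a1 - b1 * x - c1 * y)) + y * (invasion_rate x - b2 * y)
      = - (2 * b1 * x * (x - e)^2) + y * (invasion_rate x - 2 * c1 * x * (x - e)) - b2 * y^2"
    by (simp add: algebra_simps power2_eq_square)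
  moreover have "y * (invasion_rate x - 2 * c1 * x * (x - e)) \<le> 0"
    using bracket \<open>0 < y\<close> by (simp add: mult_nonneg_nonpos)
  moreover have "0 \<le> 2 * b1 * x * (x - e)^2" "0 \<le> b2 * y^2" using b1_pos b2_pos \<open>0 < x\<close> by simp_all
  ultimately show ?thesis unfolding e_def by linarith
qed

end

locale fear_exclusion_trajectory = fear_exclusion + fear_trajectory
begin

lemma eventually_v_le_smaller:
  assumes "0 < M" "c1 * M < a1" and above: "\<And>m. M < m \<Longrightarrow> \<forall>\<^sub>F t in at_top. v t \<le> m"
  shows "\<exists>m. 0 < m \<and> m < M \<and> (\<forall>\<^sub>F t in at_top. v t \<le> m)"
proof -
  \<comment> \<open>\<open>(y, M)\<close> lies on the \<open>u\<close>-nullcline.\<close>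
  define y where "y = (a1 - c1 * M) / b1"
  have "0 < y" "y \<le> a1 / b1" "c1 * M + b1 * y = a1"
    using assms b1_pos c1_pos unfolding y_def by (auto simp: divide_right_mono)
  then have "a1 - b1 * y = c1 * M" by simp
  then have "b2 * (a1 - b1 * y) / c1 = b2 * M" using c1_pos by simp
  moreover have "invasion_rate y < b2 * (a1 - b1 * y) / c1"
    using invasion_rate_less_u_nullcline \<open>0 < y\<close> \<open>y \<le> a1 / b1\<close> by simp
  ultimately have "invasion_rate y < b2 * M" by simp
  then obtain x where x: "0 < x" "x < y" "invasion_rate x < b2 * M"
    using invasion_rate_less_left \<open>0 < y\<close> by blast
  have "c1 * (M + b1 * (y - x) / (2 * c1)) + b1 * x = a1 - b1 * (y - x) / 2"
    using \<open>c1 * M + b1 * y = a1\<close>[symmetric] c1_pos by (simp add: field_simps)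
  moreover have "0 < b1 * (y - x)" using x b1_pos by simp
  ultimately have "c1 * (M + b1 * (y - x) / (2 * c1)) + b1 * x < a1" by argo
  moreover have "\<forall>\<^sub>F t in at_top. v t \<le> M + b1 * (y - x) / (2 * c1)"
    using x b1_pos c1_pos by (intro above) simp
  ultimately have u_ge: "\<forall>\<^sub>F t in at_top. x \<le> u t"
    using eventually_u_ge_if_v_le \<open>0 < x\<close> by blast
  define m where "m = (M + max 0 (invasion_rate x / b2)) / 2"
  have "0 < m" "m < M" "invasion_rate x < b2 * m"
    using \<open>0 < M\<close> x(3) b2_pos unfolding m_def by (auto simp: field_simps max_def)
  then show ?thesis using eventually_v_le_if_u_ge[OF u_ge] \<open>0 < x\<close> by force
qed

lemma eventually_v_le:
  assumes "0 < \<epsilon>"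
  shows "\<forall>\<^sub>F t in at_top. v t \<le> \<epsilon>"
proof -
  define S where "S = {m. 0 < m \<and> (\<forall>\<^sub>F t in at_top. v t \<le> m)}"
  have large: "m \<in> S" if "a2 / b2 < m" for m
  proof -
    have "0 < a2 / b2" using a2_pos b2_pos by simp
    then have "0 < m" using that by linarith
    moreover have "\<forall>\<^sub>F t in at_top. 0 \<le> u t"
      using eventually_ge_at_top[of "0::real"] by eventually_elim (use u_pos in \<open>auto intro: less_imp_le\<close>)
    moreover have "invasion_rate 0 < b2 * m" using that b2_pos by (simp add: invasion_rate_def field_simps)
    ultimately show ?thesis using eventually_v_le_if_u_ge unfolding S_def by blast
  qed
  have "S \<noteq> {}" using large[of "a2 / b2 + 1"] by auto
  have "bdd_below S" unfolding S_def by (rule bdd_belowI[of _ 0]) auto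
  \<comment> \<open>\<open>M\<close> plays the role of \<open>limsup v\<close>.\<close>
  define M where "M = Inf S"
  have above: "m \<in> S" if "M < m" for m
  proof -
    obtain m' where "m' \<in> S" "m' < m"
      using \<open>M < m\<close> cInf_less_iff[OF \<open>S \<noteq> {}\<close> \<open>bdd_below S\<close>] unfolding M_def by blast
    then show ?thesis unfolding S_def by (auto elim: eventually_mono)
  qed
  have "0 \<le> M" unfolding M_def by (rule cInf_greatest[OF \<open>S \<noteq> {}\<close>]) (simp add: S_def)
  have "M \<le> a2 / b2"
    by (rule dense_ge) (use large cInf_lower[OF _ \<open>bdd_below S\<close>] M_def in blast)
  then have "c1 * (M * b2) \<le> c1 * a2" using b2_pos c1_pos by (simp add: field_simps)
  then have "(c1 * M) * b2 < a1 * b2" using weak_competition by (simp add: ac_simps)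
  then have "c1 * M < a1" using b2_pos by simp
  have "M = 0"
  proof (rule ccontr)
    assume "M \<noteq> 0"
    then obtain m where "m < M" "m \<in> S"
      using eventually_v_le_smaller[OF _ \<open>c1 * M < a1\<close>] above \<open>0 \<le> M\<close> unfolding S_def by force
    then show False using cInf_lower[OF _ \<open>bdd_below S\<close>] unfolding M_def by force
  qed
  then show ?thesis using above assms unfolding S_def by blast
qed

lemma eventually_u_ge:
  assumes "0 < \<epsilon>"
  shows "\<forall>\<^sub>F t in at_top. a1 / b1 - \<epsilon> \<le> u t"
proof (cases "\<epsilon> < a1 / b1")
  case True
  have "c1 * (b1 * \<epsilon> / (2 * c1)) + b1 * (a1 / b1 - \<epsilon>) < a1"
    using assms b1_pos c1_pos by (simp add: field_simps)
  moreover have "\<forall>\<^sub>F t in at_top. v t \<le> b1 * \<epsilon> / (2 * c1)"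
    using assms b1_pos c1_pos by (intro eventually_v_le) simp
  ultimately show ?thesis using eventually_u_ge_if_v_le True by simp
next
  case False
  show ?thesis
    using eventually_ge_at_top[of "0::real"]
  proof eventually_elim
    case (elim t)
    with u_pos[of t] False show ?case by linarith
  qed
qed

lemma tendsto_boundary_equilibrium: "((\<lambda>t. (u t, v t)) \<longlongrightarrow> (a1 / b1, 0)) at_top"
proof (intro tendsto_Pair order_tendstoI)
  fix a assume "a < a1 / b1"
  then have "0 < (a1 / b1 - a) / 2" "a < a1 / b1 - (a1 / b1 - a) / 2" by argo+
  from eventually_u_ge[OF this(1)] show "\<forall>\<^sub>F t in at_top. a < u t"
    by eventually_elim (use \<open>a < a1 / b1 - (a1 / b1 - a) / 2\<close> in argo)
next
  fix a assume "a1 / b1 < a"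
  then have "0 < (a - a1 / b1) / 2" "a1 / b1 + (a - a1 / b1) / 2 < a" by argo+
  from eventually_u_le[OF this(1)] show "\<forall>\<^sub>F t in at_top. u t < a"
    by eventually_elim (use \<open>a1 / b1 + (a - a1 / b1) / 2 < a\<close> in argo)
next
  fix a :: real assume "a < 0"
  show "\<forall>\<^sub>F t in at_top. a < v t"
    using eventually_ge_at_top[of "0::real"]
    by eventually_elim (use v_pos \<open>a < 0\<close> in force)
next
  fix a :: real assume "0 < a"
  then have "0 < a / 2" by simp
  from eventually_v_le[OF this] show "\<forall>\<^sub>F t in at_top. v t < a"
    by eventually_elim (use \<open>0 < a\<close> in linarith)
qed

lemma lyapunov_sublevel_invariant:
  assumes "0 < \<rho>" "\<rho> \<le> a1 / b1"
    and small: "\<rho> * (a2 * k + c2 + 4 * c1 * (a1 / b1)) \<le> - invasion_rate (a1 / b1) / 2"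
    and "l \<le> \<rho>^2" "lyapunov (u 0) (v 0) < l" "0 \<le> t"
  shows "lyapunov (u t) (v t) < l"
proof (rule less_if_deriv_nonpos_below[where f = "\<lambda>t. lyapunov (u t) (v t)"])
  show "((\<lambda>t. lyapunov (u t) (v t)) has_real_derivative
      2 * (u t - a1 / b1) * (u t * (a1 - b1 * u t - c1 * v t)) + v t * (invasion_rate (u t) - b2 * v t))
      (at t within {0..})" if "0 \<le> t" for t
    unfolding lyapunov_def
    by (rule derivative_eq_intros u_deriv[OF that] v_deriv[OF that] refl | simp)+
  fix \<tau> assume "0 \<le> \<tau>" "lyapunov (u \<tau>) (v \<tau>) < l"
  then have "(u \<tau> - a1 / b1)^2 < \<rho>^2"
    using v_pos[of \<tau>] \<open>l \<le> \<rho>^2\<close> unfolding lyapunov_def by simp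
  then have "\<bar>u \<tau> - a1 / b1\<bar> < \<rho>"
    using power2_less_imp_less[of "\<bar>u \<tau> - a1 / b1\<bar>" \<rho>] \<open>0 < \<rho>\<close> by simp
  then show "2 * (u \<tau> - a1 / b1) * (u \<tau> * (a1 - b1 * u \<tau> - c1 * v \<tau>))
      + v \<tau> * (invasion_rate (u \<tau>) - b2 * v \<tau>) \<le> 0"
    using lyapunov_deriv_nonpos u_pos v_pos \<open>0 \<le> \<tau>\<close> assms(2) small by blast
qed (use assms in auto)

lemma dist_boundary_equilibrium_less:
  assumes "0 < \<rho>" "\<rho> \<le> a1 / b1" "\<rho> \<le> \<epsilon> / 2"
    and small: "\<rho> * (a2 * k + c2 + 4 * c1 * (a1 / b1)) \<le> - invasion_rate (a1 / b1) / 2"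
    and "lyapunov (u 0) (v 0) < min (\<rho>^2) (\<epsilon> / 2)" "0 \<le> t"
  shows "dist (u t, v t) (a1 / b1, 0) < \<epsilon>"
proof -
  have "lyapunov (u t) (v t) < min (\<rho>^2) (\<epsilon> / 2)"
    by (rule lyapunov_sublevel_invariant[OF assms(1,2) small min.cobounded1 assms(5,6)])
  then have "(u t - a1 / b1)^2 + v t < \<rho>^2" "(u t - a1 / b1)^2 + v t < \<epsilon> / 2"
    unfolding lyapunov_def by simp_all
  then have "(u t - a1 / b1)^2 < \<rho>^2" "v t < \<epsilon> / 2"
    using v_pos[OF \<open>0 \<le> t\<close>] zero_le_power2[of "u t - a1 / b1"] by linarith+
  then have "\<bar>u t - a1 / b1\<bar> < \<epsilon> / 2" "\<bar>v t\<bar> < \<epsilon> / 2"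
    using power2_less_imp_less[of "\<bar>u t - a1 / b1\<bar>" \<rho>] assms(1,3) v_pos[OF \<open>0 \<le> t\<close>] by auto
  then have "sqrt ((u t - a1 / b1)^2 + (v t)^2) < \<epsilon>"
    using sqrt_sum_squares_le_sum_abs[of "u t - a1 / b1" "v t"] by linarith
  then show ?thesis by (simp add: dist_Pair_Pair dist_real_def)
qed

end

context fear_exclusion
begin

lemma fear_exclusion_trajectoryI:
  assumes "fear_solution a1 a2 b1 b2 c1 c2 k u v" "0 < u 0" "0 < v 0"
  shows "fear_exclusion_trajectory a1 a2 b1 b2 c1 c2 k u v"
proof (rule fear_exclusion_trajectory.intro)
  show "fear_exclusion a1 a2 b1 b2 c1 c2 k" by unfold_locales
  show "fear_trajectory a1 a2 b1 b2 c1 c2 k u v"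
    by (rule fear_trajectory.intro, unfold_locales) (rule assms)+
qed

lemma lyapunov_less_if_near:
  assumes "dist (x, y) (a1 / b1, 0) < \<delta>" "\<delta> \<le> 1"
  shows "lyapunov x y < 2 * \<delta>"
proof -
  have x: "\<bar>x - a1 / b1\<bar> < \<delta>" and y: "y < \<delta>"
    using assms(1) dist_fst_le[of "(x, y)" "(a1 / b1, 0)"] dist_snd_le[of "(x, y)" "(a1 / b1, 0)"]
    by (auto simp: dist_real_def)
  have "(x - a1 / b1)^2 < \<delta>^2" using power_strict_mono[OF x abs_ge_zero, of 2] by simp
  also have "\<delta>^2 \<le> \<delta>" using power_decreasing[of 1 2 \<delta>] x \<open>\<delta> \<le> 1\<close> by simp
  finally show ?thesis using y unfolding lyapunov_def by simp
qed

lemma boundary_equilibrium_stable: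
  assumes "0 < \<epsilon>"
  shows "\<exists>\<delta>>0. \<forall>u v. fear_solution a1 a2 b1 b2 c1 c2 k u v \<and> 0 < u 0 \<and> 0 < v 0 \<and>
    dist (u 0, v 0) (a1 / b1, 0) < \<delta> \<longrightarrow> (\<forall>t\<ge>0. dist (u t, v t) (a1 / b1, 0) < \<epsilon>)"
proof -
  define K where "K = a2 * k + c2 + 4 * c1 * (a1 / b1)"
  have "0 < K" using a1_pos a2_pos b1_pos c1_pos c2_pos k_nonneg unfolding K_def
    by (simp add: add_nonneg_pos add_pos_pos)
  define \<rho> where "\<rho> = min (min (a1 / b1) (- invasion_rate (a1 / b1) / (2 * K))) (\<epsilon> / 2)"
  have "0 < - invasion_rate (a1 / b1) / (2 * K)"
    using \<open>0 < K\<close> invasion_rate_equilibrium_neg by (simp add: divide_neg_pos)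
  then have "0 < \<rho>" using a1_pos b1_pos \<open>0 < \<epsilon>\<close> unfolding \<rho>_def by simp
  moreover have "\<rho> \<le> a1 / b1" "\<rho> \<le> \<epsilon> / 2" unfolding \<rho>_def by (simp, rule min.cobounded2)
  ultimately have \<rho>: "0 < \<rho>" "\<rho> \<le> a1 / b1" "\<rho> \<le> \<epsilon> / 2" by blast+
  have "\<rho> \<le> - invasion_rate (a1 / b1) / (2 * K)" unfolding \<rho>_def by simp
  then have "\<rho> * K \<le> - invasion_rate (a1 / b1) / 2" using \<open>0 < K\<close> by (simp add: field_simps)
  then have small: "\<rho> * (a2 * k + c2 + 4 * c1 * (a1 / b1)) \<le> - invasion_rate (a1 / b1) / 2"
    unfolding K_def .
  define \<delta> where "\<delta> = min 1 (min (\<rho>^2) (\<epsilon> / 2) / 2)"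
  have "0 < \<delta>" "\<delta> \<le> 1" "2 * \<delta> \<le> min (\<rho>^2) (\<epsilon> / 2)"
    using \<rho>(1) \<open>0 < \<epsilon>\<close> unfolding \<delta>_def by auto
  moreover have "dist (u t, v t) (a1 / b1, 0) < \<epsilon>"
    if "fear_solution a1 a2 b1 b2 c1 c2 k u v" "0 < u 0" "0 < v 0"
      "dist (u 0, v 0) (a1 / b1, 0) < \<delta>" "0 \<le> t" for u v t
  proof -
    interpret fear_exclusion_trajectory a1 a2 b1 b2 c1 c2 k u v
      using that(1-3) by (rule fear_exclusion_trajectoryI)
    have "lyapunov (u 0) (v 0) < min (\<rho>^2) (\<epsilon> / 2)"
      using lyapunov_less_if_near[OF that(4) \<open>\<delta> \<le> 1\<close>] \<open>2 * \<delta> \<le> min (\<rho>^2) (\<epsilon> / 2)\<close> by linarith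
    then show ?thesis by (rule dist_boundary_equilibrium_less[OF \<rho> small _ that(5)])
  qed
  ultimately show ?thesis by blast
qed

lemma gas_boundary_equilibrium: "gas_positive (fear_solution a1 a2 b1 b2 c1 c2 k) (a1 / b1) 0"
  unfolding gas_positive_def
proof (intro conjI allI impI boundary_equilibrium_stable)
  fix u v assume "fear_solution a1 a2 b1 b2 c1 c2 k u v \<and> 0 < u 0 \<and> 0 < v 0"
  then interpret fear_exclusion_trajectory a1 a2 b1 b2 c1 c2 k u v
    by (intro fear_exclusion_trajectoryI) auto
  show "((\<lambda>t. (u t, v t)) \<longlongrightarrow> (a1 / b1, 0)) at_top" by (rule tendsto_boundary_equilibrium)
qed

end

theorem mainTheorem1:
  fixes a1 a2 b1 b2 c1 c2 k :: real
  assumes "a1 > 0" "a2 > 0" "b1 > 0" "b2 > 0" "c1 > 0" "c2 > 0" "k \<ge> 0"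
    and "c2 / b1 < a2 / a1" "a2 / a1 < b2 / c1"
    and "b1 * b2 - c1 * c2 > 0"
    and "b2 * b1 > 2 * c1 * c2"
    and "k > (b1^2 * a2 - a1 * c2 * b1) / (a1^2 * c2)"
  shows "gas_positive (fear_solution a1 a2 b1 b2 c1 c2 k) (a1 / b1) 0"
proof -
  interpret fear_competition a1 a2 b1 b2 c1 c2 k
    using assms(1-7) by unfold_locales
  have "a2 * c1 < a1 * b2" using \<open>a2 / a1 < b2 / c1\<close> \<open>a1 > 0\<close> \<open>c1 > 0\<close> by (simp add: field_simps)
  moreover have "invasion_rate (a1 / b1) < 0" using invasion_rate_neg_iff assms(12) by simp
  ultimately interpret fear_exclusion a1 a2 b1 b2 c1 c2 k by unfold_locales
  show ?thesis by (rule gas_boundary_equilibrium)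
qed

end
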